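(* Let $\mathcal{T}$ be a periodic Cartesian mesh of the two-dimensional torus with $N_x\times N_y=N$ rectangular cells $c_{i,j}$, where cell $c_{i,j}$ has midpoint $(m^x_{i,j},m^y_{i,j})$ and side lengths $L^x_{i,j}$, $L^y_{i,j}$. Let $V$ be the space of vector fields $\mathbf{u}$ such that on each cell $c_{i,j}$, $$\mathbf{u}|_{c_{i,j}}\in\operatorname{span}\left\{\begin{pmatrix}1\\0\end{pmatrix},\ \begin{pmatrix}0\\1\end{pmatrix},\ \begin{pmatrix}\frac{2}{L^x_{i,j}}(m^x_{i,j}-x)\\ \frac{2}{L^y_{i,j}}(y-m^y_{i,j})\end{pmatrix}\right\}.$$ Then the subspace of $V$ of fields satisfying $[\![\mathbf{u}\cdot\mathbf{n}_f]\!]=0$ for every face $f$ of the mesh has dimension $N+1$.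
   Context: Each face $f$ carries a fixed unit normal $\mathbf{n}_f$; the cell into which $\mathbf{n}_f$ points is the right cell $R$, the other the left cell $L$, and $[\![\mathbf{u}\cdot\mathbf{n}_f]\!]=\mathbf{u}_R\cdot\mathbf{n}_f-\mathbf{u}_L\cdot\mathbf{n}_f$ (traces from each side along $f$). *)

theory Defs
  imports "HOL-Analysis.Analysis" "HOL-Library.Function_Algebras"
begin

text \<open>Periodic Cartesian (tensor-product) mesh of the 2-torus
  [0, sum hx) x [0, sum hy): Nx columns of widths hx 0, ..., hx (Nx-1) and
  Ny rows of heights hy 0, ..., hy (Ny-1).  Cell c_{i,j} (i < Nx, j < Ny) is
  [xb i, xb (i+1)] x [yb j, yb (j+1)], with side lengths L^x_{i,j} = hx i,
  L^y_{i,j} = hy j and midpoint (xb i + hx i / 2, yb j + hy j / 2).\<close>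

definition brk :: "(nat \<Rightarrow> real) \<Rightarrow> nat \<Rightarrow> real" where
  "brk h i = (\<Sum>k<i. h k)"

definition cell :: "(nat \<Rightarrow> real) \<Rightarrow> (nat \<Rightarrow> real) \<Rightarrow> nat \<Rightarrow> nat \<Rightarrow> (real \<times> real) set" where
  "cell hx hy i j = {brk hx i .. brk hx (Suc i)} \<times> {brk hy j .. brk hy (Suc j)}"

definition midx :: "(nat \<Rightarrow> real) \<Rightarrow> nat \<Rightarrow> real" where
  "midx hx i = brk hx i + hx i / 2"

definition midy :: "(nat \<Rightarrow> real) \<Rightarrow> nat \<Rightarrow> real" where
  "midy hy j = brk hy j + hy j / 2"

definition psi3 :: "(nat \<Rightarrow> real) \<Rightarrow> (nat \<Rightarrow> real) \<Rightarrow> nat \<Rightarrow> nat \<Rightarrow> real \<times> real \<Rightarrow> real \<times> real" where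
  "psi3 hx hy i j p = ((2 / hx i) * (midx hx i - fst p), (2 / hy j) * (snd p - midy hy j))"

text \<open>A broken (cell-wise defined) vector field is represented by the family of its
  restrictions to the closed cells: u i j is the field on cell c_{i,j} (extended by 0
  outside the cell and for indices outside the mesh).  Since every admissible local
  field is a polynomial, its value on the boundary of the closed cell is the trace
  from inside the cell.\<close>
type_synonym broken_field = "nat \<Rightarrow> nat \<Rightarrow> real \<times> real \<Rightarrow> real \<times> real"

definition Vspace :: "nat \<Rightarrow> nat \<Rightarrow> (nat \<Rightarrow> real) \<Rightarrow> (nat \<Rightarrow> real) \<Rightarrow> broken_field set" where
  "Vspace Nx Ny hx hy = {u.
     (\<forall>i j. (i < Nx \<and> j < Ny) \<longrightarrow>
        (\<exists>a b c. \<forall>p \<in> cell hx hy i j.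
            u i j p = a *\<^sub>R (1, 0) + b *\<^sub>R (0, 1) + c *\<^sub>R psi3 hx hy i j p)
        \<and> (\<forall>p. p \<notin> cell hx hy i j \<longrightarrow> u i j p = 0)) \<and>
     (\<forall>i j. \<not> (i < Nx \<and> j < Ny) \<longrightarrow> u i j = (\<lambda>p. 0))}"

text \<open>Vertical faces: the face between c_{i,j}
  (left cell L) and c_{(i+1) mod Nx, j} (right cell R), normal n = (1,0) pointing
  into R; on R it sits at x = xb ((i+1) mod Nx) (periodicity), on L at x = xb (i+1).
  Horizontal faces: between c_{i,j} (L) and c_{i,(j+1) mod Ny} (R), normal (0,1).\<close>
definition normal_jumps_vanish :: "nat \<Rightarrow> nat \<Rightarrow> (nat \<Rightarrow> real) \<Rightarrow> (nat \<Rightarrow> real) \<Rightarrow> broken_field \<Rightarrow> bool" where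
  "normal_jumps_vanish Nx Ny hx hy u \<longleftrightarrow>
     (\<forall>i < Nx. \<forall>j < Ny. \<forall>t \<in> {brk hy j .. brk hy (Suc j)}.
        u (Suc i mod Nx) j (brk hx (Suc i mod Nx), t) \<bullet> (1, 0)
          - u i j (brk hx (Suc i), t) \<bullet> (1, 0) = 0) \<and>
     (\<forall>i < Nx. \<forall>j < Ny. \<forall>t \<in> {brk hx i .. brk hx (Suc i)}.
        u i (Suc j mod Ny) (t, brk hy (Suc j mod Ny)) \<bullet> (0, 1)
          - u i j (t, brk hy (Suc j)) \<bullet> (0, 1) = 0)"

definition bscale :: "real \<Rightarrow> broken_field \<Rightarrow> broken_field" where
  "bscale r u = (\<lambda>i j p. r *\<^sub>R u i j p)"

end

theory Submission imports Defs begin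

(* On each cell the admissible field is alpha (1,0) + beta (0,1) + gamma psi3, whose normal
   component is constant on every face: alpha + gamma on the left and alpha - gamma on the right
   face, beta - gamma on the bottom and beta + gamma on the top face.  So the conforming fields
   are described by cyclic recurrences a (k+1) + c (k+1) = a k - c k, one for (alpha, gamma)
   along every row and one for (beta, -gamma) along every column.  Summing a recurrence around
   the circle forces the c's to sum to zero, and conversely such c determine a up to one
   value.  The space is therefore parametrised by gamma with vanishing row and column sums
   ((Nx-1)(Ny-1) values), one alpha per row and one beta per column: N + 1 in total.
   Concretely, point evaluations of these quantities are biorthogonal to explicit conforming
   fields and separate the conforming space. *)

lemma (in vector_space) dim_eq_card_biorthogonal:
  fixes b :: "'i \<Rightarrow> 'b" and \<theta> :: "'i \<Rightarrow> 'b \<Rightarrow> 'a"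
  assumes W: "subspace W" and I: "finite I" and b: "\<And>k. k \<in> I \<Longrightarrow> b k \<in> W"
    and \<theta>_add: "\<And>k u v. \<theta> k (u + v) = \<theta> k u + \<theta> k v"
    and \<theta>_scale: "\<And>k r u. \<theta> k (scale r u) = r * \<theta> k u"
    and \<theta>_b: "\<And>k l. k \<in> I \<Longrightarrow> l \<in> I \<Longrightarrow> \<theta> k (b l) = (if k = l then 1 else 0)"
    and separating: "\<And>u. u \<in> W \<Longrightarrow> \<forall>k\<in>I. \<theta> k u = 0 \<Longrightarrow> u = 0"
  shows "dim W = card I"
proof -
  have \<theta>_sum: "\<theta> k (\<Sum>x\<in>t. scale (w x) (f x)) = (\<Sum>x\<in>t. w x * \<theta> k (f x))" if "finite t" for k t w f
    using that
  proof (induction t rule: finite_induct)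
    case empty
    show ?case using \<theta>_scale[of k 0 0] by simp
  qed (simp add: \<theta>_add \<theta>_scale)
  have b_inj: "inj_on b I"
    by (rule inj_onI) (metis \<theta>_b one_neq_zero)
  have expansion: "u = (\<Sum>k\<in>I. scale (\<theta> k u) (b k))" if u: "u \<in> W" for u
  proof -
    let ?r = "u - (\<Sum>k\<in>I. scale (\<theta> k u) (b k))"
    have "?r \<in> W"
      using W u b by (intro subspace_diff subspace_sum subspace_scale) auto
    moreover have "\<theta> l ?r = 0" if l: "l \<in> I" for l
    proof -
      have "\<theta> l ?r + (\<Sum>k\<in>I. \<theta> k u * \<theta> l (b k)) = \<theta> l u"
        using \<theta>_add[of l ?r "\<Sum>k\<in>I. scale (\<theta> k u) (b k)"] \<theta>_sum[OF I, of l "\<lambda>k. \<theta> k u" b] by simp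
      moreover have "(\<Sum>k\<in>I. \<theta> k u * \<theta> l (b k)) = \<theta> l u"
        using I l by (simp add: \<theta>_b if_distrib[of "(*) _"] cong: sum.cong if_cong)
      ultimately show ?thesis by simp
    qed
    ultimately show ?thesis using separating by fastforce
  qed
  show ?thesis
  proof (rule dim_unique[of "b ` I"])
    show "b ` I \<subseteq> W" using b by blast
    show "W \<subseteq> span (b ` I)"
    proof
      fix u assume "u \<in> W"
      then show "u \<in> span (b ` I)"
        by (subst expansion) (auto intro: span_sum span_scale span_base)
    qed
    show "independent (b ` I)"
      unfolding independent_explicit_module
    proof (intro allI impI)
      fix t w v
      assume t: "finite t" "t \<subseteq> b ` I" and zero: "(\<Sum>x\<in>t. scale (w x) x) = 0" and v: "v \<in> t"
      then obtain l where l: "l \<in> I" "v = b l" by blast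
      have "w x * \<theta> l x = (if x = v then w x else 0)" if "x \<in> t" for x
        using that t l \<theta>_b b_inj by (auto simp: inj_on_eq_iff)
      then have "(\<Sum>x\<in>t. w x * \<theta> l x) = w v"
        using t(1) v by (simp cong: sum.cong)
      moreover have "(\<Sum>x\<in>t. w x * \<theta> l x) = 0"
        using \<theta>_sum[OF t(1), of l w id] zero \<theta>_scale[of l 0 0] by simp
      ultimately show "w v = 0" by simp
    qed
    show "card (b ` I) = card I" by (rule card_image[OF b_inj])
  qed
qed

lemma sum_lessThan_rotate: "(\<Sum>k<n. f (Suc k mod n)) = (\<Sum>k<n. f k)"
proof (cases n)
  case (Suc m)
  have "(\<Sum>k<Suc m. f (Suc k mod Suc m)) = (\<Sum>k<m. f (Suc k)) + f 0"
    by (simp add: sum.lessThan_Suc)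
  also have "\<dots> = (\<Sum>k<Suc m. f k)"
    by (subst sum.lessThan_Suc_shift) (simp add: add.commute)
  finally show ?thesis using Suc by simp
qed simp

(* a k + c k t is an affine function on the k-th cell of a cyclic chain, with t = 1 at the left
   and t = -1 at the right end of the cell; the predicate says that neighbouring traces agree. *)
definition cyclic_traces_match :: "nat \<Rightarrow> (nat \<Rightarrow> real) \<Rightarrow> (nat \<Rightarrow> real) \<Rightarrow> bool" where
  "cyclic_traces_match n a c \<longleftrightarrow> (\<forall>k<n. a (Suc k mod n) + c (Suc k mod n) = a k - c k)"

definition cyclic_primitive :: "(nat \<Rightarrow> real) \<Rightarrow> nat \<Rightarrow> real" where
  "cyclic_primitive c k = - c k - 2 * (\<Sum>m<k. c m)"

lemma cyclic_traces_match_sum_eq_0: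
  assumes "cyclic_traces_match n a c"
  shows "(\<Sum>k<n. c k) = 0"
proof -
  have "(\<Sum>k<n. a (Suc k mod n) + c (Suc k mod n)) = (\<Sum>k<n. a k - c k)"
    using assms by (simp add: cyclic_traces_match_def)
  then have "(\<Sum>k<n. a k) + (\<Sum>k<n. c k) = (\<Sum>k<n. a k) - (\<Sum>k<n. c k)"
    by (simp add: sum.distrib sum_subtractf sum_lessThan_rotate)
  then show ?thesis by simp
qed

lemma cyclic_traces_match_last_jump:
  assumes "cyclic_traces_match n a c" and "\<And>k. k < n - 1 \<Longrightarrow> c k = 0" and "k < n"
  shows "c k = 0"
proof (cases "k < n - 1")
  case False
  then have n: "n = Suc k" using \<open>k < n\<close> by simp
  have "(\<Sum>k<n. c k) = c k"
    using assms(2) by (simp add: n sum.lessThan_Suc)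
  then show ?thesis using cyclic_traces_match_sum_eq_0[OF assms(1)] by simp
qed (use assms(2) in simp)

lemma cyclic_traces_match_const:
  assumes "cyclic_traces_match n a c" and "\<And>k. k < n \<Longrightarrow> c k = 0" and "k < n"
  shows "a k = a 0"
  using \<open>k < n\<close>
proof (induction k)
  case (Suc k)
  have "a (Suc k) + c (Suc k) = a k - c k"
    using assms(1) Suc.prems unfolding cyclic_traces_match_def by (metis Suc_lessD mod_less)
  then show ?case using Suc assms(2)[of k] assms(2)[of "Suc k"] by simp
qed simp

lemma cyclic_traces_match_primitive:
  assumes "(\<Sum>k<n. c k) = 0"
  shows "cyclic_traces_match n (cyclic_primitive c) c"
  unfolding cyclic_traces_match_def
proof (intro allI impI)
  fix k assume k: "k < n"
  show "cyclic_primitive c (Suc k mod n) + c (Suc k mod n) = cyclic_primitive c k - c k"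
  proof (cases "Suc k < n")
    case True
    then show ?thesis by (simp add: cyclic_primitive_def)
  next
    case False
    then have n: "n = Suc k" using k by simp
    then have "(\<Sum>m<k. c m) = - c k" using assms by simp
    then show ?thesis by (simp add: n cyclic_primitive_def)
  qed
qed

lemma cyclic_primitive_0 [simp]: "cyclic_primitive c 0 = - c 0"
  by (simp add: cyclic_primitive_def)

lemma cyclic_traces_match_mult:
  "cyclic_traces_match n a c \<Longrightarrow> cyclic_traces_match n (\<lambda>k. a k * r) (\<lambda>k. c k * r)"
  by (simp add: cyclic_traces_match_def flip: distrib_right left_diff_distrib)

definition dipole :: "nat \<Rightarrow> nat \<Rightarrow> nat \<Rightarrow> real" where
  "dipole n i k = of_bool (k = i) - of_bool (k = n - 1)"

lemma sum_dipole: "i < n \<Longrightarrow> (\<Sum>k<n. dipole n i k) = 0"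
  by (simp add: dipole_def sum_subtractf)

interpretation broken: vector_space bscale
  by unfold_locales (auto simp: bscale_def fun_eq_iff scaleR_add_right scaleR_add_left)

lemma inner_Pair_1_0 [simp]: "(x :: real \<times> real) \<bullet> (1, 0) = fst x"
  by (cases x) (simp add: inner_prod_def)

lemma inner_Pair_0_1 [simp]: "(x :: real \<times> real) \<bullet> (0, 1) = snd x"
  by (cases x) (simp add: inner_prod_def)

lemma brk_Suc: "brk h (Suc i) = brk h i + h i"
  by (simp add: brk_def)

type_synonym cell_coeffs = "nat \<Rightarrow> nat \<Rightarrow> real"

datatype dof = Row nat | Column nat | Interior nat nat

locale mesh =
  fixes Nx Ny :: nat and hx hy :: "nat \<Rightarrow> real"
  assumes Nx: "Nx \<ge> 1" and Ny: "Ny \<ge> 1"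
    and hx_pos: "\<And>i. i < Nx \<Longrightarrow> hx i > 0"
    and hy_pos: "\<And>j. j < Ny \<Longrightarrow> hy j > 0"
begin

definition coeff_field :: "cell_coeffs \<Rightarrow> cell_coeffs \<Rightarrow> cell_coeffs \<Rightarrow> broken_field" where
  "coeff_field \<alpha> \<beta> \<gamma> = (\<lambda>i j p. if i < Nx \<and> j < Ny \<and> p \<in> cell hx hy i j
     then \<alpha> i j *\<^sub>R (1, 0) + \<beta> i j *\<^sub>R (0, 1) + \<gamma> i j *\<^sub>R psi3 hx hy i j p else 0)"

definition traces_match :: "cell_coeffs \<Rightarrow> cell_coeffs \<Rightarrow> cell_coeffs \<Rightarrow> bool" where
  "traces_match \<alpha> \<beta> \<gamma> \<longleftrightarrow>
     (\<forall>j<Ny. cyclic_traces_match Nx (\<lambda>i. \<alpha> i j) (\<lambda>i. \<gamma> i j)) \<and>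
     (\<forall>i<Nx. cyclic_traces_match Ny (\<beta> i) (\<lambda>j. - \<gamma> i j))"

abbreviation conforming_fields :: "broken_field set" where
  "conforming_fields \<equiv> {u \<in> Vspace Nx Ny hx hy. normal_jumps_vanish Nx Ny hx hy u}"

lemma Vspace_iff_coeff_field: "u \<in> Vspace Nx Ny hx hy \<longleftrightarrow> (\<exists>\<alpha> \<beta> \<gamma>. u = coeff_field \<alpha> \<beta> \<gamma>)"
proof
  assume u: "u \<in> Vspace Nx Ny hx hy"
  have "\<forall>i j. \<exists>a b c. i < Nx \<and> j < Ny \<longrightarrow>
      (\<forall>p\<in>cell hx hy i j. u i j p = a *\<^sub>R (1, 0) + b *\<^sub>R (0, 1) + c *\<^sub>R psi3 hx hy i j p)"
    using u unfolding Vspace_def mem_Collect_eq by meson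
  then obtain \<alpha> \<beta> \<gamma> where on_cells: "\<And>i j p. i < Nx \<Longrightarrow> j < Ny \<Longrightarrow> p \<in> cell hx hy i j \<Longrightarrow>
      u i j p = \<alpha> i j *\<^sub>R (1, 0) + \<beta> i j *\<^sub>R (0, 1) + \<gamma> i j *\<^sub>R psi3 hx hy i j p"
    by metis
  have off_cells: "u i j p = 0" if "\<not> (i < Nx \<and> j < Ny \<and> p \<in> cell hx hy i j)" for i j p
  proof (cases "i < Nx \<and> j < Ny")
    case True
    then show ?thesis using u that unfolding Vspace_def mem_Collect_eq by meson
  next
    case False
    then show ?thesis using u unfolding Vspace_def mem_Collect_eq by metis
  qed
  have "u = coeff_field \<alpha> \<beta> \<gamma>"
  proof (intro ext)
    fix i j p
    show "u i j p = coeff_field \<alpha> \<beta> \<gamma> i j p"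
      using on_cells[of i j p] off_cells[of i j p] by (simp add: coeff_field_def)
  qed
  then show "\<exists>\<alpha> \<beta> \<gamma>. u = coeff_field \<alpha> \<beta> \<gamma>" by blast
next
  assume "\<exists>\<alpha> \<beta> \<gamma>. u = coeff_field \<alpha> \<beta> \<gamma>"
  then obtain \<alpha> \<beta> \<gamma> where u: "u = coeff_field \<alpha> \<beta> \<gamma>" by blast
  have "(\<exists>a b c. \<forall>p\<in>cell hx hy i j.
      u i j p = a *\<^sub>R (1, 0) + b *\<^sub>R (0, 1) + c *\<^sub>R psi3 hx hy i j p) \<and>
      (\<forall>p. p \<notin> cell hx hy i j \<longrightarrow> u i j p = 0)" if "i < Nx" "j < Ny" for i j
    using that by (intro conjI exI[of _ "\<alpha> i j"] exI[of _ "\<beta> i j"] exI[of _ "\<gamma> i j"])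
      (simp_all add: u coeff_field_def)
  moreover have "u i j = (\<lambda>p. 0)" if "\<not> (i < Nx \<and> j < Ny)" for i j
    using that by (auto simp: u coeff_field_def)
  ultimately show "u \<in> Vspace Nx Ny hx hy"
    unfolding Vspace_def mem_Collect_eq by blast
qed

lemma midx_mem: "i < Nx \<Longrightarrow> midx hx i \<in> {brk hx i..brk hx (Suc i)}"
  using hx_pos[of i] by (simp add: brk_Suc midx_def)

lemma midy_mem: "j < Ny \<Longrightarrow> midy hy j \<in> {brk hy j..brk hy (Suc j)}"
  using hy_pos[of j] by (simp add: brk_Suc midy_def)

context
  fixes i j :: nat
  assumes ij: "i < Nx" "j < Ny"
begin

lemma coeff_field_left:
  "t \<in> {brk hy j..brk hy (Suc j)} \<Longrightarrow> fst (coeff_field \<alpha> \<beta> \<gamma> i j (brk hx i, t)) = \<alpha> i j + \<gamma> i j"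
  using ij midx_mem[of i] hx_pos[of i] by (simp add: coeff_field_def cell_def psi3_def midx_def)

lemma coeff_field_right:
  "t \<in> {brk hy j..brk hy (Suc j)} \<Longrightarrow> fst (coeff_field \<alpha> \<beta> \<gamma> i j (brk hx (Suc i), t)) = \<alpha> i j - \<gamma> i j"
  using ij midx_mem[of i] hx_pos[of i] by (simp add: coeff_field_def cell_def psi3_def midx_def brk_Suc)

lemma coeff_field_bottom:
  "t \<in> {brk hx i..brk hx (Suc i)} \<Longrightarrow> snd (coeff_field \<alpha> \<beta> \<gamma> i j (t, brk hy j)) = \<beta> i j - \<gamma> i j"
  using ij midy_mem[of j] hy_pos[of j] by (simp add: coeff_field_def cell_def psi3_def midy_def)

lemma coeff_field_top:
  "t \<in> {brk hx i..brk hx (Suc i)} \<Longrightarrow> snd (coeff_field \<alpha> \<beta> \<gamma> i j (t, brk hy (Suc j))) = \<beta> i j + \<gamma> i j"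
  using ij midy_mem[of j] hy_pos[of j] by (simp add: coeff_field_def cell_def psi3_def midy_def brk_Suc)

lemma coeff_field_midpoint:
  "coeff_field \<alpha> \<beta> \<gamma> i j (midx hx i, midy hy j) = (\<alpha> i j, \<beta> i j)"
  using ij midx_mem[of i] midy_mem[of j] by (simp add: coeff_field_def cell_def psi3_def)

end

lemma normal_jumps_vanish_coeff_field:
  "normal_jumps_vanish Nx Ny hx hy (coeff_field \<alpha> \<beta> \<gamma>) \<longleftrightarrow> traces_match \<alpha> \<beta> \<gamma>"
proof -
  have vertical: "(\<forall>t\<in>{brk hy j..brk hy (Suc j)}.
        fst (coeff_field \<alpha> \<beta> \<gamma> (Suc i mod Nx) j (brk hx (Suc i mod Nx), t))
          - fst (coeff_field \<alpha> \<beta> \<gamma> i j (brk hx (Suc i), t)) = 0) \<longleftrightarrow>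
      \<alpha> (Suc i mod Nx) j + \<gamma> (Suc i mod Nx) j = \<alpha> i j - \<gamma> i j" if "i < Nx" "j < Ny" for i j
  proof -
    have "Suc i mod Nx < Nx" using Nx by simp
    moreover have "brk hy j \<in> {brk hy j..brk hy (Suc j)}"
      using midy_mem[of j] that by simp
    ultimately show ?thesis using that by (auto simp: coeff_field_left coeff_field_right)
  qed
  have horizontal: "(\<forall>t\<in>{brk hx i..brk hx (Suc i)}.
        snd (coeff_field \<alpha> \<beta> \<gamma> i (Suc j mod Ny) (t, brk hy (Suc j mod Ny)))
          - snd (coeff_field \<alpha> \<beta> \<gamma> i j (t, brk hy (Suc j))) = 0) \<longleftrightarrow>
      \<beta> i (Suc j mod Ny) - \<gamma> i (Suc j mod Ny) = \<beta> i j + \<gamma> i j" if "i < Nx" "j < Ny" for i j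
  proof -
    have "Suc j mod Ny < Ny" using Ny by simp
    moreover have "brk hx i \<in> {brk hx i..brk hx (Suc i)}"
      using midx_mem[of i] that by simp
    ultimately show ?thesis using that by (auto simp: coeff_field_bottom coeff_field_top)
  qed
  have "normal_jumps_vanish Nx Ny hx hy (coeff_field \<alpha> \<beta> \<gamma>) \<longleftrightarrow>
      (\<forall>i<Nx. \<forall>j<Ny. \<alpha> (Suc i mod Nx) j + \<gamma> (Suc i mod Nx) j = \<alpha> i j - \<gamma> i j) \<and>
      (\<forall>i<Nx. \<forall>j<Ny. \<beta> i (Suc j mod Ny) - \<gamma> i (Suc j mod Ny) = \<beta> i j + \<gamma> i j)"
    unfolding normal_jumps_vanish_def inner_Pair_1_0 inner_Pair_0_1
    by (simp only: vertical horizontal cong: imp_cong conj_cong)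
  also have "\<dots> \<longleftrightarrow> traces_match \<alpha> \<beta> \<gamma>"
    by (auto simp: traces_match_def cyclic_traces_match_def)
  finally show ?thesis .
qed

lemma conforming_fields_iff:
  "u \<in> conforming_fields \<longleftrightarrow> (\<exists>\<alpha> \<beta> \<gamma>. traces_match \<alpha> \<beta> \<gamma> \<and> u = coeff_field \<alpha> \<beta> \<gamma>)"
  by (auto simp: Vspace_iff_coeff_field normal_jumps_vanish_coeff_field) blast

lemma coeff_field_add:
  "coeff_field \<alpha> \<beta> \<gamma> + coeff_field \<alpha>' \<beta>' \<gamma>' =
   coeff_field (\<lambda>i j. \<alpha> i j + \<alpha>' i j) (\<lambda>i j. \<beta> i j + \<beta>' i j) (\<lambda>i j. \<gamma> i j + \<gamma>' i j)"
  by (simp add: coeff_field_def fun_eq_iff scaleR_add_left)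

lemma coeff_field_scale:
  "bscale r (coeff_field \<alpha> \<beta> \<gamma>) =
   coeff_field (\<lambda>i j. r * \<alpha> i j) (\<lambda>i j. r * \<beta> i j) (\<lambda>i j. r * \<gamma> i j)"
  by (simp add: bscale_def coeff_field_def fun_eq_iff scaleR_add_right)

lemma coeff_field_eq_0:
  assumes "\<And>i j. i < Nx \<Longrightarrow> j < Ny \<Longrightarrow> \<alpha> i j = 0 \<and> \<beta> i j = 0 \<and> \<gamma> i j = 0"
  shows "coeff_field \<alpha> \<beta> \<gamma> = 0"
  using assms by (simp add: coeff_field_def fun_eq_iff zero_prod_def)

lemma subspace_Vspace: "broken.subspace (Vspace Nx Ny hx hy)"
  unfolding broken.subspace_def
proof (intro conjI ballI allI)
  have "coeff_field (\<lambda>_ _. 0) (\<lambda>_ _. 0) (\<lambda>_ _. 0) = 0"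
    by (rule coeff_field_eq_0) simp
  then show "0 \<in> Vspace Nx Ny hx hy"
    unfolding Vspace_iff_coeff_field by metis
next
  fix u v assume "u \<in> Vspace Nx Ny hx hy" "v \<in> Vspace Nx Ny hx hy"
  then obtain \<alpha> \<beta> \<gamma> \<alpha>' \<beta>' \<gamma>' where "u = coeff_field \<alpha> \<beta> \<gamma>" "v = coeff_field \<alpha>' \<beta>' \<gamma>'"
    unfolding Vspace_iff_coeff_field by blast
  then show "u + v \<in> Vspace Nx Ny hx hy"
    unfolding Vspace_iff_coeff_field by (auto simp: coeff_field_add)
next
  fix r u assume "u \<in> Vspace Nx Ny hx hy"
  then obtain \<alpha> \<beta> \<gamma> where "u = coeff_field \<alpha> \<beta> \<gamma>"
    unfolding Vspace_iff_coeff_field by blast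
  then show "bscale r u \<in> Vspace Nx Ny hx hy"
    unfolding Vspace_iff_coeff_field by (auto simp: coeff_field_scale)
qed

lemma subspace_conforming_fields: "broken.subspace conforming_fields"
  using subspace_Vspace unfolding broken.subspace_def
  by (auto simp: normal_jumps_vanish_def zero_prod_def bscale_def)

lemma traces_match_coeffs_eq_0:
  assumes matching: "traces_match \<alpha> \<beta> \<gamma>"
    and row: "\<And>j. j < Ny \<Longrightarrow> \<alpha> 0 j + \<gamma> 0 j = 0"
    and column: "\<And>i. i < Nx \<Longrightarrow> \<beta> i 0 - \<gamma> i 0 = 0"
    and interior: "\<And>i j. i < Nx - 1 \<Longrightarrow> j < Ny - 1 \<Longrightarrow> \<gamma> i j = 0"
    and ij: "i < Nx" "j < Ny"
  shows "\<alpha> i j = 0 \<and> \<beta> i j = 0 \<and> \<gamma> i j = 0"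
proof -
  have rows: "cyclic_traces_match Nx (\<lambda>i. \<alpha> i j) (\<lambda>i. \<gamma> i j)" if "j < Ny" for j
    using matching that by (simp add: traces_match_def)
  have columns: "cyclic_traces_match Ny (\<beta> i) (\<lambda>j. - \<gamma> i j)" if "i < Nx" for i
    using matching that by (simp add: traces_match_def)
  have \<gamma>_below_top: "\<gamma> i j = 0" if "i < Nx" "j < Ny - 1" for i j
  proof (rule cyclic_traces_match_last_jump[OF rows])
    show "j < Ny" "i < Nx" using that by auto
    show "\<gamma> k j = 0" if "k < Nx - 1" for k
      using interior \<open>j < Ny - 1\<close> that by blast
  qed
  have \<gamma>_eq_0: "\<gamma> i j = 0" if "i < Nx" "j < Ny" for i j
  proof -
    have "- \<gamma> i j = 0"
    proof (rule cyclic_traces_match_last_jump[OF columns])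
      show "i < Nx" "j < Ny" using that by auto
      show "- \<gamma> i l = 0" if "l < Ny - 1" for l
        using \<gamma>_below_top \<open>i < Nx\<close> that by simp
    qed
    then show ?thesis by simp
  qed
  have "\<alpha> i j = \<alpha> 0 j"
    by (rule cyclic_traces_match_const[OF rows[OF \<open>j < Ny\<close>]]) (use \<gamma>_eq_0 ij in auto)
  moreover have "\<beta> i j = \<beta> i 0"
    by (rule cyclic_traces_match_const[OF columns[OF \<open>i < Nx\<close>]]) (use \<gamma>_eq_0 ij in auto)
  moreover have "0 < Nx" "0 < Ny" using Nx Ny by auto
  ultimately show ?thesis
    using row[of j] column[of i] \<gamma>_eq_0[of 0 j] \<gamma>_eq_0[of i 0] \<gamma>_eq_0[of i j] ij by simp
qed

definition dofs :: "dof set" where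
  "dofs = Row ` {..<Ny} \<union> Column ` {..<Nx} \<union> case_prod Interior ` ({..<Nx - 1} \<times> {..<Ny - 1})"

lemma dofs_iff [simp]:
  "Row j \<in> dofs \<longleftrightarrow> j < Ny"
  "Column i \<in> dofs \<longleftrightarrow> i < Nx"
  "Interior i j \<in> dofs \<longleftrightarrow> i < Nx - 1 \<and> j < Ny - 1"
  by (auto simp: dofs_def)

lemma finite_dofs: "finite dofs"
  by (simp add: dofs_def)

primrec coord :: "dof \<Rightarrow> broken_field \<Rightarrow> real" where
  "coord (Row j) u = fst (u 0 j (brk hx 0, midy hy j))"
| "coord (Column i) u = snd (u i 0 (midx hx i, brk hy 0))"
| "coord (Interior i j) u = fst (u i j (brk hx i, midy hy j)) - fst (u i j (midx hx i, midy hy j))"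

lemma coord_add: "coord k (u + v) = coord k u + coord k v"
  by (cases k) simp_all

lemma coord_scale: "coord k (bscale r u) = r * coord k u"
  by (cases k) (simp_all add: bscale_def right_diff_distrib)

lemma coord_coeff_field:
  shows "j < Ny \<Longrightarrow> coord (Row j) (coeff_field \<alpha> \<beta> \<gamma>) = \<alpha> 0 j + \<gamma> 0 j"
    and "i < Nx \<Longrightarrow> coord (Column i) (coeff_field \<alpha> \<beta> \<gamma>) = \<beta> i 0 - \<gamma> i 0"
    and "i < Nx \<Longrightarrow> j < Ny \<Longrightarrow> coord (Interior i j) (coeff_field \<alpha> \<beta> \<gamma>) = \<gamma> i j"
  using Nx Ny midx_mem midy_mem
  by (simp_all add: coeff_field_left coeff_field_bottom coeff_field_midpoint)

primrec basis_field :: "dof \<Rightarrow> broken_field" where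
  "basis_field (Row j') = coeff_field (\<lambda>_ j. of_bool (j = j')) (\<lambda>_ _. 0) (\<lambda>_ _. 0)"
| "basis_field (Column i') = coeff_field (\<lambda>_ _. 0) (\<lambda>i _. of_bool (i = i')) (\<lambda>_ _. 0)"
| \<comment> \<open>gamma has vanishing row and column sums; alpha and beta are its cyclic primitives\<close>
  "basis_field (Interior i' j') = coeff_field
     (\<lambda>i j. cyclic_primitive (dipole Nx i') i * dipole Ny j' j)
     (\<lambda>i j. cyclic_primitive (\<lambda>j. - dipole Ny j' j) j * dipole Nx i' i)
     (\<lambda>i j. dipole Nx i' i * dipole Ny j' j)"

lemma basis_field_conforming: "k \<in> dofs \<Longrightarrow> basis_field k \<in> conforming_fields"
proof (cases k)
  case (Row j')
  have "traces_match (\<lambda>_ j. of_bool (j = j')) (\<lambda>_ _. 0) (\<lambda>_ _. 0)"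
    by (simp add: traces_match_def cyclic_traces_match_def)
  then show ?thesis unfolding Row conforming_fields_iff by auto
next
  case (Column i')
  have "traces_match (\<lambda>_ _. 0) (\<lambda>i _. of_bool (i = i')) (\<lambda>_ _. 0)"
    by (simp add: traces_match_def cyclic_traces_match_def)
  then show ?thesis unfolding Column conforming_fields_iff by auto
next
  case (Interior i' j')
  assume "k \<in> dofs"
  then have "i' < Nx" "j' < Ny" using Interior by auto
  then have "cyclic_traces_match Nx (\<lambda>i. cyclic_primitive (dipole Nx i') i * dipole Ny j' j)
      (\<lambda>i. dipole Nx i' i * dipole Ny j' j)"
    and "cyclic_traces_match Ny (\<lambda>j. cyclic_primitive (\<lambda>j. - dipole Ny j' j) j * dipole Nx i' i)
      (\<lambda>j. - dipole Ny j' j * dipole Nx i' i)" for i j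
    by (intro cyclic_traces_match_mult cyclic_traces_match_primitive; simp add: sum_dipole sum_negf)+
  then have "traces_match
     (\<lambda>i j. cyclic_primitive (dipole Nx i') i * dipole Ny j' j)
     (\<lambda>i j. cyclic_primitive (\<lambda>j. - dipole Ny j' j) j * dipole Nx i' i)
     (\<lambda>i j. dipole Nx i' i * dipole Ny j' j)"
    by (simp add: traces_match_def mult.commute[of "dipole Nx i' _"])
  then show ?thesis unfolding Interior conforming_fields_iff by auto
qed

lemma coord_basis_field:
  "k \<in> dofs \<Longrightarrow> l \<in> dofs \<Longrightarrow> coord k (basis_field l) = (if k = l then 1 else 0)"
  by (cases k; cases l) (auto simp: coord_coeff_field dipole_def simp del: coord.simps)

lemma dofs_separate_conforming_fields:
  assumes "u \<in> conforming_fields" and "\<forall>k\<in>dofs. coord k u = 0"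
  shows "u = 0"
proof -
  obtain \<alpha> \<beta> \<gamma> where matching: "traces_match \<alpha> \<beta> \<gamma>" and u: "u = coeff_field \<alpha> \<beta> \<gamma>"
    using assms(1) conforming_fields_iff by blast
  have dof_vanishes: "coord k u = 0" if "k \<in> dofs" for k
    using assms(2) that by blast
  have row: "\<alpha> 0 j + \<gamma> 0 j = 0" if "j < Ny" for j
    using dof_vanishes[of "Row j"] that by (simp add: u coord_coeff_field del: coord.simps)
  have column: "\<beta> i 0 - \<gamma> i 0 = 0" if "i < Nx" for i
    using dof_vanishes[of "Column i"] that by (simp add: u coord_coeff_field del: coord.simps)
  have interior: "\<gamma> i j = 0" if "i < Nx - 1" "j < Ny - 1" for i j
    using dof_vanishes[of "Interior i j"] that by (simp add: u coord_coeff_field del: coord.simps)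
  from matching row column interior show ?thesis
    unfolding u by (intro coeff_field_eq_0 traces_match_coeffs_eq_0) auto
qed

lemma card_dofs: "card dofs = Nx * Ny + 1"
proof -
  have "card dofs = card (Row ` {..<Ny}) + card (Column ` {..<Nx}) +
      card (case_prod Interior ` ({..<Nx - 1} \<times> {..<Ny - 1}))"
    unfolding dofs_def by (subst card_Un_disjoint; (subst card_Un_disjoint)?; auto)
  also have "\<dots> = Ny + Nx + (Nx - 1) * (Ny - 1)"
    by (simp add: card_image inj_on_def card_cartesian_product)
  also have "\<dots> = Nx * Ny + 1"
    using Nx Ny by (cases Nx; cases Ny) auto
  finally show ?thesis .
qed

end

theorem proposition15:
  fixes Nx Ny :: nat and hx hy :: "nat \<Rightarrow> real"
  assumes "Nx \<ge> 1" and "Ny \<ge> 1"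
    and "\<And>i. i < Nx \<Longrightarrow> hx i > 0"
    and "\<And>j. j < Ny \<Longrightarrow> hy j > 0"
  shows "vector_space.dim bscale
           {u \<in> Vspace Nx Ny hx hy. normal_jumps_vanish Nx Ny hx hy u} = Nx * Ny + 1"
proof -
  interpret mesh Nx Ny hx hy
    using assms by unfold_locales
  have "broken.dim conforming_fields = card dofs"
    by (rule broken.dim_eq_card_biorthogonal[OF subspace_conforming_fields finite_dofs
          basis_field_conforming coord_add coord_scale coord_basis_field
          dofs_separate_conforming_fields])
  then show ?thesis by (simp add: card_dofs)
qed

end
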